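(* Let $X=(X(t))_{t\in\mathbb R}$ be a wide sense stationary random process with covariance function $R_X$ and symmetric spectral measure $\mu$, and let $0<\alpha<1$. Then the following are equivalent: (i) $\int_{\mathbb R}|\lambda|^{2\alpha}\,d\mu(\lambda)<\infty$; (ii) $\int_{\mathbb R}|R_X(0)-R_X(h)|\,\frac{dh}{|h|^{1+2\alpha}}<\infty$.
   Context: A wide sense stationary random process $X=(X(t))_{t\in\mathbb R}\subset L^2(\Omega,\mathcal F,\mathbf P)$ satisfies $\mathbf E X(t)=0$, $\mathbf E(X(t)\overline{X(s)})=R_X(t-s)$ for all $t,s$, and $\lim_{t\to0}\mathbf E|X(t)-X(0)|^2=0$. By Bochner's theorem $R_X(\tau)=\int_{\mathbb R}e^{i\lambda\tau}\,d\mu(\lambda)$ for a finite Borel measure $\mu$ (the spectral measure); symmetric means $\mu(-A)=\mu(A)$ for Borel $A$. *)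

theory Defs
  imports "HOL-Probability.Probability"
begin

definition wss_process :: "'a measure \<Rightarrow> (real \<Rightarrow> 'a \<Rightarrow> complex) \<Rightarrow> (real \<Rightarrow> complex) \<Rightarrow> bool" where
  "wss_process M X R \<longleftrightarrow>
     prob_space M \<and>
     (\<forall>t. X t \<in> borel_measurable M \<and> integrable M (\<lambda>\<omega>. (cmod (X t \<omega>))\<^sup>2)) \<and>
     (\<forall>t. (LINT \<omega>|M. X t \<omega>) = 0) \<and>
     (\<forall>t s. (LINT \<omega>|M. X t \<omega> * cnj (X s \<omega>)) = R (t - s)) \<and>
     ((\<lambda>t. LINT \<omega>|M. (cmod (X t \<omega> - X 0 \<omega>))\<^sup>2) \<longlongrightarrow> 0) (at 0)"

definition spectral_measure :: "(real \<Rightarrow> complex) \<Rightarrow> real measure \<Rightarrow> bool" where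
  "spectral_measure R \<mu> \<longleftrightarrow>
     finite_measure \<mu> \<and> sets \<mu> = sets borel \<and>
     (\<forall>\<tau>. R \<tau> = (LINT l|\<mu>. cis (l * \<tau>)))"

definition symmetric_measure :: "real measure \<Rightarrow> bool" where
  "symmetric_measure \<mu> \<longleftrightarrow> (\<forall>A \<in> sets borel. emeasure \<mu> (uminus ` A) = emeasure \<mu> A)"

end

theory Submission
  imports Defs
begin

text \<open>Writing \<open>R 0 - R h\<close> through the symmetric spectral measure gives
\<open>|R 0 - R h| = \<integral> (1 - cos (\<lambda> h)) d\<mu>(\<lambda>)\<close>. By Tonelli the integral in (ii) becomes
\<open>\<integral> \<integral> (1 - cos (\<lambda> h)) / |h|^(1+2\<alpha>) dh d\<mu>(\<lambda>)\<close>, and the substitution \<open>u = \<lambda> h\<close>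
turns the inner integral into \<open>|\<lambda>|^(2\<alpha>) C\<close> with
\<open>C = \<integral> (1 - cos u) / |u|^(1+2\<alpha>) du\<close>. For \<open>0 < \<alpha> < 1\<close> the constant \<open>C\<close> is positive
and finite (the integrand is \<open>O(|u|^(1-2\<alpha>))\<close> at 0 and \<open>O(|u|^(-1-2\<alpha>))\<close> at infinity),
so the two integrals are finite together.\<close>

lemma one_minus_cos_le_half_square: "1 - cos x \<le> (x::real)\<^sup>2 / 2"
proof -
  have "cos x = 1 - 2 * sin (x / 2) ^ 2"
    using cos_double_sin[of "x / 2"] by simp
  moreover have "sin (x / 2) ^ 2 \<le> (x / 2) ^ 2"
    using abs_sin_x_le_abs_x[of "x / 2"] by (metis abs_ge_zero power2_abs power_mono)
  ultimately show ?thesis by (simp add: power_divide)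
qed

lemma nn_integral_abs_le_lborel:
  fixes f :: "real \<Rightarrow> ennreal"
  assumes [measurable]: "f \<in> borel_measurable borel"
  shows "(\<integral>\<^sup>+u. f \<bar>u\<bar> \<partial>lborel) \<le> 2 * (\<integral>\<^sup>+u. f u \<partial>lborel)"
proof -
  have "(\<integral>\<^sup>+u. f \<bar>u\<bar> \<partial>lborel) \<le> (\<integral>\<^sup>+u. f u + f (- u) \<partial>lborel)"
    by (intro nn_integral_mono) (simp add: abs_if add_increasing add_increasing2)
  also have "\<dots> = (\<integral>\<^sup>+u. f u \<partial>lborel) + (\<integral>\<^sup>+u. f (- u) \<partial>lborel)"
    by (rule nn_integral_add) auto
  also have "(\<integral>\<^sup>+u. f (- u) \<partial>lborel) = (\<integral>\<^sup>+u. f u \<partial>lborel)"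
    using nn_integral_real_affine[of f "-1" 0] by simp
  finally show ?thesis by (simp add: mult_2)
qed

definition cos_kernel_integral :: "real \<Rightarrow> ennreal" where
  "cos_kernel_integral s = (\<integral>\<^sup>+u. ennreal ((1 - cos u) / \<bar>u\<bar> powr s) \<partial>lborel)"

lemma cos_kernel_integral_nonzero: "cos_kernel_integral s \<noteq> 0"
proof -
  define c where "c = (1 - cos 1) / 2 powr \<bar>s\<bar>"
  have "cos (1::real) < cos 0"
    by (rule cos_monotone_0_pi) (use pi_gt3 in auto)
  then have "c > 0" unfolding c_def by simp
  have lower: "c * indicator {1..2} u \<le> (1 - cos u) / \<bar>u\<bar> powr s" for u :: real
  proof (cases "u \<in> {1..2}")
    case True
    have "cos u \<le> cos 1"
      by (rule cos_monotone_0_pi_le) (use True pi_gt3 in auto)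
    moreover have "\<bar>u\<bar> powr s \<le> 2 powr \<bar>s\<bar>"
    proof -
      have "\<bar>u\<bar> powr s \<le> \<bar>u\<bar> powr \<bar>s\<bar>" using True by (intro powr_mono) auto
      also have "\<dots> \<le> 2 powr \<bar>s\<bar>" using True by (intro powr_mono2) auto
      finally show ?thesis .
    qed
    ultimately show ?thesis using True unfolding c_def by (simp add: frac_le)
  qed simp
  have "ennreal c = (\<integral>\<^sup>+u. ennreal (c * indicator {1..2::real} u) \<partial>lborel)"
    using \<open>c > 0\<close> by (simp add: ennreal_mult nn_integral_cmult ennreal_indicator)
  also have "\<dots> \<le> cos_kernel_integral s"
    unfolding cos_kernel_integral_def by (intro nn_integral_mono ennreal_leI lower)
  finally show ?thesis using \<open>c > 0\<close> by (auto simp: ennreal_eq_0_iff)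
qed

lemma cos_kernel_integral_finite:
  assumes "1 < s" "s < 3"
  shows "cos_kernel_integral s < \<infinity>"
proof -
  define h where "h t = (if t \<in> {0..1} then t powr (2 - s) else 0)
    + (if t \<in> {1..} then t powr (- s) else 0)" for t :: real
  have [measurable]: "h \<in> borel_measurable borel" unfolding h_def by measurable
  have "((\<lambda>t. t powr (2 - s)) has_integral 1 / (3 - s)) {0..1}"
    using has_integral_powr_from_0[of "2 - s" 1] assms by simp
  moreover have "((\<lambda>t. t powr (- s)) has_integral 1 / (s - 1)) {1..}"
    using has_integral_powr_to_inf[of "- s" 1] assms by (simp add: minus_divide_right)
  ultimately have "(h has_integral 1 / (3 - s) + 1 / (s - 1)) UNIV"
    unfolding h_def by (intro has_integral_add has_integral_restrict_UNIV[THEN iffD2])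
  then have h_finite: "(\<integral>\<^sup>+t. ennreal (h t) \<partial>lborel) < \<infinity>"
    by (subst nn_integral_has_integral_lborel) (auto simp: h_def)
  have bound: "(1 - cos u) / \<bar>u\<bar> powr s \<le> 2 * h \<bar>u\<bar>" for u :: real
  proof -
    consider "u = 0" | "\<bar>u\<bar> \<in> {0<..1}" | "1 \<le> \<bar>u\<bar>" by fastforce
    then show ?thesis
    proof cases
      case 2
      then have "(1 - cos u) / \<bar>u\<bar> powr s \<le> (\<bar>u\<bar> powr 2 / 2) / \<bar>u\<bar> powr s"
        using one_minus_cos_le_half_square[of u] by (intro divide_right_mono) (auto simp: powr_numeral)
      also have "\<dots> = \<bar>u\<bar> powr (2 - s) / 2" by (simp add: powr_diff)
      also have "\<dots> \<le> 2 * h \<bar>u\<bar>" using 2 unfolding h_def by auto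
      finally show ?thesis .
    next
      case 3
      then have "(1 - cos u) / \<bar>u\<bar> powr s \<le> 2 / \<bar>u\<bar> powr s"
        by (intro divide_right_mono) auto
      also have "\<dots> \<le> 2 * h \<bar>u\<bar>" using 3 unfolding h_def by (auto simp: powr_minus divide_inverse)
      finally show ?thesis .
    qed (simp add: h_def)
  qed
  have "cos_kernel_integral s \<le> (\<integral>\<^sup>+u. 2 * ennreal (h \<bar>u\<bar>) \<partial>lborel)"
    unfolding cos_kernel_integral_def
    using ennreal_leI[OF bound] by (intro nn_integral_mono) (simp add: ennreal_mult')
  also have "\<dots> = 2 * (\<integral>\<^sup>+u. ennreal (h \<bar>u\<bar>) \<partial>lborel)"
    by (rule nn_integral_cmult) auto
  also have "\<dots> \<le> 2 * (2 * (\<integral>\<^sup>+t. ennreal (h t) \<partial>lborel))"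
    by (intro mult_left_mono nn_integral_abs_le_lborel) auto
  also have "\<dots> < \<infinity>" using h_finite by (simp add: ennreal_mult_less_top)
  finally show ?thesis .
qed

text \<open>At \<open>l = 0\<close> both sides vanish, the right one because \<open>0 powr _ = 0\<close>.\<close>
lemma nn_integral_one_minus_cos_scaled:
  "(\<integral>\<^sup>+h. ennreal ((1 - cos (l * h)) / \<bar>h\<bar> powr s) \<partial>lborel)
     = ennreal (\<bar>l\<bar> powr (s - 1)) * cos_kernel_integral s"
proof (cases "l = 0")
  case False
  define g where "g u = (1 - cos u) / \<bar>u\<bar> powr s" for u :: real
  have [measurable]: "g \<in> borel_measurable borel" unfolding g_def by measurable
  have g_nonneg: "0 \<le> g u" for u unfolding g_def by simp
  have "(1 - cos (l * h)) / \<bar>h\<bar> powr s = \<bar>l\<bar> powr (s - 1) * (\<bar>l\<bar> * g (l * h))" for h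
    using False unfolding g_def by (simp add: abs_mult powr_mult powr_diff)
  then have "(\<integral>\<^sup>+h. ennreal ((1 - cos (l * h)) / \<bar>h\<bar> powr s) \<partial>lborel)
      = ennreal (\<bar>l\<bar> powr (s - 1)) * (ennreal \<bar>l\<bar> * (\<integral>\<^sup>+h. ennreal (g (0 + l * h)) \<partial>lborel))"
    by (simp add: g_nonneg ennreal_mult nn_integral_cmult)
  also have "ennreal \<bar>l\<bar> * (\<integral>\<^sup>+h. ennreal (g (0 + l * h)) \<partial>lborel) = cos_kernel_integral s"
    unfolding cos_kernel_integral_def g_def[symmetric]
    by (rule nn_integral_real_affine[symmetric]) (use False in auto)
  finally show ?thesis .
qed simp

lemma symmetric_measure_distr_uminus:
  assumes "sets \<mu> = sets borel" "symmetric_measure \<mu>"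
  shows "distr \<mu> borel uminus = \<mu>"
proof (rule measure_eqI)
  show "sets (distr \<mu> borel uminus) = sets \<mu>" using assms(1) by simp
next
  fix A assume "A \<in> sets (distr \<mu> borel uminus)"
  then have A: "A \<in> sets borel" by simp
  have uminus_measurable: "uminus \<in> measurable \<mu> borel"
    unfolding measurable_cong_sets[OF assms(1) refl] by simp
  have "uminus -` A \<inter> space \<mu> = uminus ` A"
    using sets_eq_imp_space_eq[OF assms(1)] by (auto simp: image_iff) (metis minus_minus)
  then show "emeasure (distr \<mu> borel uminus) A = emeasure \<mu> A"
    using assms(2) A unfolding symmetric_measure_def
    by (simp add: emeasure_distr[OF uminus_measurable A])
qed

lemma integral_odd_symmetric_measure:
  fixes f :: "real \<Rightarrow> 'b::{banach, second_countable_topology}"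
  assumes "sets \<mu> = sets borel" "symmetric_measure \<mu>"
    and "f \<in> borel_measurable borel" and odd: "\<And>x. f (- x) = - f x"
  shows "(LINT l|\<mu>. f l) = 0"
proof -
  have "(LINT l|\<mu>. f l) = (LINT l|distr \<mu> borel uminus. f l)"
    using symmetric_measure_distr_uminus[OF assms(1,2)] by simp
  also have "\<dots> = (LINT l|\<mu>. f (- l))"
    using assms(1,3) by (intro integral_distr) (simp_all add: measurable_cong_sets[OF assms(1) refl])
  also have "\<dots> = - (LINT l|\<mu>. f l)" by (simp add: odd)
  finally have "(LINT l|\<mu>. f l) + (LINT l|\<mu>. f l) = 0" by (metis right_minus)
  then show ?thesis by (simp flip: scaleR_2)
qed

lemma spectral_measure_increment:
  assumes "spectral_measure R \<mu>" "symmetric_measure \<mu>"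
  shows "cmod (R 0 - R h) = (LINT l|\<mu>. 1 - cos (l * h))"
proof -
  have sets: "sets \<mu> = sets borel" and R: "\<And>\<tau>. R \<tau> = (LINT l|\<mu>. cis (l * \<tau>))"
    and "finite_measure \<mu>"
    using assms(1) unfolding spectral_measure_def by auto
  interpret finite_measure \<mu> by fact
  have cos_integrable: "integrable \<mu> (\<lambda>l. cos (l * h))"
    and sin_integrable: "integrable \<mu> (\<lambda>l. sin (l * h))"
    by (intro integrable_const_bound[where B = 1];
        simp add: measurable_cong_sets[OF sets refl])+
  have "(LINT l|\<mu>. sin (l * h)) = 0"
    using assms(2) sets by (intro integral_odd_symmetric_measure) auto
  then have "R h = complex_of_real (LINT l|\<mu>. cos (l * h))"
    using cos_integrable sin_integrable unfolding R by (simp add: cis.ctr Complex_eq)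
  moreover have "R 0 = complex_of_real (LINT l|\<mu>. 1)"
    unfolding R by (simp add: scaleR_conv_of_real)
  ultimately have "R 0 - R h = complex_of_real (LINT l|\<mu>. 1 - cos (l * h))"
    using cos_integrable by simp
  moreover have "0 \<le> (LINT l|\<mu>. 1 - cos (l * h))"
    by (rule integral_nonneg_AE) simp
  ultimately show ?thesis by simp
qed

lemma nn_integral_spectral_increment:
  assumes "spectral_measure R \<mu>" "symmetric_measure \<mu>"
  shows "(\<integral>\<^sup>+h. ennreal (cmod (R 0 - R h) / \<bar>h\<bar> powr s) \<partial>lborel)
     = (\<integral>\<^sup>+l. ennreal (\<bar>l\<bar> powr (s - 1)) \<partial>\<mu>) * cos_kernel_integral s"
proof -
  have sets: "sets \<mu> = sets borel" and "finite_measure \<mu>"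
    using assms(1) unfolding spectral_measure_def by auto
  interpret finite_measure \<mu> by fact
  interpret pair_sigma_finite \<mu> lborel by unfold_locales
  define F where "F l h = ennreal ((1 - cos (l * h)) / \<bar>h\<bar> powr s)" for l h :: real
  have "case_prod F \<in> borel_measurable (borel \<Otimes>\<^sub>M borel)"
    unfolding F_def by measurable
  moreover have "sets (\<mu> \<Otimes>\<^sub>M lborel) = sets (borel \<Otimes>\<^sub>M borel)"
    by (rule sets_pair_measure_cong) (simp_all add: sets)
  ultimately have F_measurable: "case_prod F \<in> borel_measurable (\<mu> \<Otimes>\<^sub>M lborel)"
    using measurable_cong_sets by blast
  have "ennreal (cmod (R 0 - R h) / \<bar>h\<bar> powr s) = (\<integral>\<^sup>+l. F l h \<partial>\<mu>)" for h
  proof -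
    have "integrable \<mu> (\<lambda>l. cos (l * h))"
      by (intro integrable_const_bound[where B = 1]) (simp_all add: measurable_cong_sets[OF sets refl])
    then show ?thesis
      unfolding spectral_measure_increment[OF assms] F_def
      by (subst nn_integral_eq_integral) auto
  qed
  then have "(\<integral>\<^sup>+h. ennreal (cmod (R 0 - R h) / \<bar>h\<bar> powr s) \<partial>lborel)
      = (\<integral>\<^sup>+h. (\<integral>\<^sup>+l. F l h \<partial>\<mu>) \<partial>lborel)" by simp
  also have "\<dots> = (\<integral>\<^sup>+l. (\<integral>\<^sup>+h. F l h \<partial>lborel) \<partial>\<mu>)"
    by (rule Fubini'[OF F_measurable])
  also have "\<dots> = (\<integral>\<^sup>+l. ennreal (\<bar>l\<bar> powr (s - 1)) * cos_kernel_integral s \<partial>\<mu>)"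
    unfolding F_def nn_integral_one_minus_cos_scaled ..
  also have "\<dots> = (\<integral>\<^sup>+l. ennreal (\<bar>l\<bar> powr (s - 1)) \<partial>\<mu>) * cos_kernel_integral s"
    by (rule nn_integral_multc) (simp add: measurable_cong_sets[OF sets refl])
  finally show ?thesis .
qed

theorem mainTheorem6:
  fixes M :: "'a measure" and X :: "real \<Rightarrow> 'a \<Rightarrow> complex"
    and R :: "real \<Rightarrow> complex" and \<mu> :: "real measure" and \<alpha> :: real
  assumes "wss_process M X R"
    and "spectral_measure R \<mu>"
    and "symmetric_measure \<mu>"
    and "0 < \<alpha>" and "\<alpha> < 1"
  shows "(\<integral>\<^sup>+ l. ennreal (\<bar>l\<bar> powr (2 * \<alpha>)) \<partial>\<mu>) < \<infinity>
     \<longleftrightarrow> (\<integral>\<^sup>+ h. ennreal (cmod (R 0 - R h) / \<bar>h\<bar> powr (1 + 2 * \<alpha>)) \<partial>lborel) < \<infinity>"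
proof -
  have "0 < cos_kernel_integral (1 + 2 * \<alpha>)"
    using cos_kernel_integral_nonzero by (simp add: zero_less_iff_neq_zero)
  moreover have "cos_kernel_integral (1 + 2 * \<alpha>) < \<infinity>"
    using assms(4,5) by (intro cos_kernel_integral_finite) auto
  ultimately show ?thesis
    unfolding nn_integral_spectral_increment[OF assms(2,3)]
    by (auto simp: ennreal_mult_less_top top.not_eq_extremum)
qed

end
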